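(* Fix parameters $\mathfrak h=(h,\varepsilon,\theta)$. Let $\chi$ satisfy (OBS.1) and $f$ satisfy (RHS.2); if (RHS.2b) holds, assume moreover that condition (M.1) holds. Let $w_h,v_h\in\mathbb V_h$ satisfy $$\mathbb T_{\mathfrak h}[w_h;f,\chi](z)\le0\le\mathbb T_{\mathfrak h}[v_h;f,\chi](z)\qquad\forall z\in\mathcal N_h^I,$$ and $w_h(z)\le v_h(z)$ for all $z\in\mathcal N_h^b$. Then $w_h(z)\le v_h(z)$ for all $z\in\mathcal N_h$.
   Context: Setting: $\Omega\subset\mathbb R^d$ ($d\ge1$) is a bounded domain with continuous boundary. For $r>0$, $\Omega^{(r)}=\{x\in\Omega:\operatorname{dist}(x,\partial\Omega)>r\}$. $\mathcal T_h$ is a mesh of closed simplices, $h=\max_T\operatorname{diam}T$, $\Omega_h$ the interior of the union of the simplices, with $\Omega^{(h)}\subset\Omega_h\subset\Omega$; $\mathcal N_h$ is the set of vertices. $\mathbb V_h$ is the space of continuous piecewise linear functions on $\mathcal T_h$ with hat basis $\{\hat\varphi_z\}$ and Lagrange interpolant $\mathcal I_h$. Parameters $\mathfrak h=(h,\varepsilon,\theta)$ with $\varepsilon\in[h,\operatorname{diam}\Omega]$, $0<\theta\le1$. $\mathcal N_h^I=\mathcal N_h\cap\Omega^{(2\varepsilon)}$, $\mathcal N_h^b=\mathcal N_h\setminus\mathcal N_h^I$. $\mathbb S_\theta$ is a finite symmetric subset of the unit sphere $\mathbb S$ such that each $v\in\mathbb S$ has $v_\theta\in\mathbb S_\theta$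 with $|v-v_\theta|\le\theta$. For $z\in\mathcal N_h^I$, $\mathcal N_{\mathfrak h}(z)=\{z\}\cup\{z+\varepsilon v_\theta:v_\theta\in\mathbb S_\theta\}$ and $-\Delta^\diamond_{\infty,\mathfrak h}w(z)=\varepsilon^{-2}\big(2w(z)-\max_{x\in\mathcal N_{\mathfrak h}(z)}\mathcal I_hw(x)-\min_{x\in\mathcal N_{\mathfrak h}(z)}\mathcal I_hw(x)\big)$ for $w\in C(\overline\Omega)$. $\widetilde{\mathcal N}_{\mathfrak h}(z)=\{z\}\cup\{z'\in\mathcal N_h:\exists v_\theta\in\mathbb S_\theta,\ \hat\varphi_{z'}(z+\varepsilon v_\theta)>0\}$. (M.1): for every nonempty $S\subset\mathcal N_h^I$ there exist $z\in S$, $z'\in\mathcal N_h\setminus S$ with $z'\in\widetilde{\mathcal N}_{\mathfrak h}(z)$. (RHS.2): either (RHS.2a) $\sup_\Omega f<0$ or $\inf_\Omega f>0$, or (RHS.2b) $f\equiv0$. (OBS.1): $\chi\in C(\overline\Omega)$ and $\chi<g$ on $\partial\Omega$ for a given boundary datum $g\in C(\partial\Omega)$. Discrete obstacle operator: $\mathbb T_{\mathfrak h}[w;f,\chi](z)=\min\{-\Delta^\diamond_{\infty,\mathfrak h}w(z)-f(z),\,w(z)-\chi(z)\}$ for $z\in\mathcal N_h^I$. *)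

theory Defs
  imports "HOL-Analysis.Analysis"
begin

definition inner_dom :: "'a::euclidean_space set \<Rightarrow> real \<Rightarrow> 'a set" where
  "inner_dom \<Omega> r = {x \<in> \<Omega>. infdist x (frontier \<Omega>) > r}"

definition continuous_boundary_domain :: "'a::euclidean_space set \<Rightarrow> bool" where
  "continuous_boundary_domain \<Omega> \<longleftrightarrow>
     open \<Omega> \<and> connected \<Omega> \<and> bounded \<Omega> \<and> \<Omega> \<noteq> {} \<and>
     (\<forall>x\<in>frontier \<Omega>. \<exists>e r \<gamma>. norm e = 1 \<and> r > 0 \<and>
        continuous_on {u. u \<bullet> e = 0} (\<gamma> :: 'a \<Rightarrow> real) \<and>
        (\<forall>y\<in>ball x r. y \<in> \<Omega> \<longleftrightarrow> y \<bullet> e > \<gamma> (y - (y \<bullet> e) *\<^sub>R e)))"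

text \<open>A mesh is represented by the family of vertex sets of its (closed) simplices;
  the simplex with vertex set S is  convex hull S.\<close>
definition simplicial_mesh :: "'a::euclidean_space set set \<Rightarrow> bool" where
  "simplicial_mesh Th \<longleftrightarrow> finite Th \<and> Th \<noteq> {} \<and>
     (\<forall>S\<in>Th. finite S \<and> card S = DIM('a) + 1 \<and> \<not> affine_dependent S) \<and>
     (\<forall>S1\<in>Th. \<forall>S2\<in>Th. convex hull S1 \<inter> convex hull S2 = convex hull (S1 \<inter> S2))"

definition mesh_size :: "'a::euclidean_space set set \<Rightarrow> real" where
  "mesh_size Th = Max ((\<lambda>S. diameter (convex hull S)) ` Th)"

definition mesh_domain :: "'a::euclidean_space set set \<Rightarrow> 'a set" where
  "mesh_domain Th = interior (\<Union>S\<in>Th. convex hull S)"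

definition nodes :: "'a::euclidean_space set set \<Rightarrow> 'a set" where
  "nodes Th = \<Union> Th"

definition bary :: "'a::euclidean_space set \<Rightarrow> 'a \<Rightarrow> 'a \<Rightarrow> real" where
  "bary S z x = (THE c. \<exists>u. sum u S = 1 \<and> (\<Sum>y\<in>S. u y *\<^sub>R y) = x \<and> u z = c)"

definition hat :: "'a::euclidean_space set set \<Rightarrow> 'a \<Rightarrow> 'a \<Rightarrow> real" where
  "hat Th z x =
     (if \<exists>S\<in>Th. z \<in> S \<and> x \<in> convex hull S
      then bary (SOME S. S \<in> Th \<and> z \<in> S \<and> x \<in> convex hull S) z x else 0)"

definition interp :: "'a::euclidean_space set set \<Rightarrow> ('a \<Rightarrow> real) \<Rightarrow> 'a \<Rightarrow> real" where
  "interp Th w x = (\<Sum>z\<in>nodes Th. w z * hat Th z x)"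

text \<open>V_h: continuous piecewise linear functions = span of the hat basis (on the closure of Omega_h).\<close>
definition Vh :: "'a::euclidean_space set set \<Rightarrow> ('a \<Rightarrow> real) set" where
  "Vh Th = {w. \<exists>c. \<forall>x\<in>(\<Union>S\<in>Th. convex hull S). w x = (\<Sum>z\<in>nodes Th. c z * hat Th z x)}"

definition direction_set :: "real \<Rightarrow> 'a::euclidean_space set \<Rightarrow> bool" where
  "direction_set \<theta> S \<longleftrightarrow> finite S \<and> S \<subseteq> sphere 0 1 \<and> (\<forall>v\<in>S. - v \<in> S) \<and>
     (\<forall>v\<in>sphere 0 1. \<exists>v\<^sub>\<theta>\<in>S. norm (v - v\<^sub>\<theta>) \<le> \<theta>)"

definition interior_nodes :: "'a::euclidean_space set \<Rightarrow> 'a set set \<Rightarrow> real \<Rightarrow> 'a set" where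
  "interior_nodes \<Omega> Th \<epsilon> = nodes Th \<inter> inner_dom \<Omega> (2 * \<epsilon>)"

definition boundary_nodes :: "'a::euclidean_space set \<Rightarrow> 'a set set \<Rightarrow> real \<Rightarrow> 'a set" where
  "boundary_nodes \<Omega> Th \<epsilon> = nodes Th - interior_nodes \<Omega> Th \<epsilon>"

definition stencil :: "'a::euclidean_space set \<Rightarrow> real \<Rightarrow> 'a \<Rightarrow> 'a set" where
  "stencil S\<^sub>\<theta> \<epsilon> z = insert z ((\<lambda>v. z + \<epsilon> *\<^sub>R v) ` S\<^sub>\<theta>)"

definition neg_inf_lap :: "'a::euclidean_space set set \<Rightarrow> 'a set \<Rightarrow> real \<Rightarrow> ('a \<Rightarrow> real) \<Rightarrow> 'a \<Rightarrow> real" where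
  "neg_inf_lap Th S\<^sub>\<theta> \<epsilon> w z =
     (2 * w z - Max (interp Th w ` stencil S\<^sub>\<theta> \<epsilon> z) - Min (interp Th w ` stencil S\<^sub>\<theta> \<epsilon> z)) / \<epsilon>\<^sup>2"

definition obstacle_op :: "'a::euclidean_space set set \<Rightarrow> 'a set \<Rightarrow> real \<Rightarrow> ('a \<Rightarrow> real) \<Rightarrow> ('a \<Rightarrow> real) \<Rightarrow> ('a \<Rightarrow> real) \<Rightarrow> 'a \<Rightarrow> real" where
  "obstacle_op Th S\<^sub>\<theta> \<epsilon> w f \<psi> z = min (neg_inf_lap Th S\<^sub>\<theta> \<epsilon> w z - f z) (w z - \<psi> z)"

definition ext_stencil :: "'a::euclidean_space set set \<Rightarrow> 'a set \<Rightarrow> real \<Rightarrow> 'a \<Rightarrow> 'a set" where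
  "ext_stencil Th S\<^sub>\<theta> \<epsilon> z = insert z {z' \<in> nodes Th. \<exists>v\<in>S\<^sub>\<theta>. hat Th z' (z + \<epsilon> *\<^sub>R v) > 0}"

definition cond_M1 :: "'a::euclidean_space set \<Rightarrow> 'a set set \<Rightarrow> 'a set \<Rightarrow> real \<Rightarrow> bool" where
  "cond_M1 \<Omega> Th S\<^sub>\<theta> \<epsilon> \<longleftrightarrow>
     (\<forall>S. S \<subseteq> interior_nodes \<Omega> Th \<epsilon> \<and> S \<noteq> {} \<longrightarrow>
        (\<exists>z\<in>S. \<exists>z'\<in>nodes Th - S. z' \<in> ext_stencil Th S\<^sub>\<theta> \<epsilon> z))"

end

theory Submission
  imports Defs
begin

text \<open>Suppose w - v had a positive maximum over the nodes, attained on the contact set C.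
  Boundary nodes are excluded from C, and at a node of C the subsolution lies strictly above
  v \<ge> \<psi>, so the obstacle is inactive: -\<Delta>w \<le> f \<le> -\<Delta>v there. Interpolation is a convex
  combination of nodal values, so I_h w \<le> I_h v + max(w - v) on every stencil, which gives the
  reverse inequality -\<Delta>w \<ge> -\<Delta>v on C. Hence stencil maxima and minima of I_h w and I_h v
  differ exactly by the maximum, and any stencil point realising one of them has its whole hat
  support in C. At the node of C where w is largest (f < 0) or v is smallest (f > 0) this gives
  -\<Delta> of the wrong sign; when f = 0 the stencil of such a node is flat, and (M.1) yields a
  neighbour outside the set of these nodes which is nevertheless forced into it.\<close>

lemma bary_eqI:
  fixes S :: "'a::euclidean_space set"
  assumes fin: "finite S" and indep: "\<not> affine_dependent S"
    and u: "sum u S = 1" "(\<Sum>y\<in>S. u y *\<^sub>R y) = x" and z: "z \<in> S"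
  shows "bary S z x = u z"
  unfolding bary_def
proof (rule the_equality)
  show "\<exists>u'. sum u' S = 1 \<and> (\<Sum>y\<in>S. u' y *\<^sub>R y) = x \<and> u' z = u z"
    using u by blast
next
  fix c assume "\<exists>u'. sum u' S = 1 \<and> (\<Sum>y\<in>S. u' y *\<^sub>R y) = x \<and> u' z = c"
  then obtain u' where u': "sum u' S = 1" "(\<Sum>y\<in>S. u' y *\<^sub>R y) = x" "u' z = c"
    by blast
  show "c = u z"
  proof (rule ccontr)
    assume "c \<noteq> u z"
    define U where "U = (\<lambda>y. u' y - u y)"
    have "sum U S = 0" using u u' by (simp add: U_def sum_subtractf)
    moreover have "\<exists>v\<in>S. U v \<noteq> 0" using z \<open>c \<noteq> u z\<close> u' by (auto simp: U_def)
    moreover have "(\<Sum>v\<in>S. U v *\<^sub>R v) = 0"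
      using u u' by (simp add: U_def scaleR_diff_left sum_subtractf)
    ultimately have "affine_dependent S"
      using affine_dependent_explicit_finite[OF fin] by blast
    with indep show False by blast
  qed
qed

lemma bary_conforming:
  fixes Th :: "'a::euclidean_space set set"
  assumes mesh: "simplicial_mesh Th" and S1: "S1 \<in> Th" and S2: "S2 \<in> Th"
    and x1: "x \<in> convex hull S1" and x2: "x \<in> convex hull S2" and z: "z \<in> S1"
  shows "bary S1 z x = (if z \<in> S2 then bary S2 z x else 0)"
proof -
  have f1: "finite S1" "\<not> affine_dependent S1" and f2: "finite S2" "\<not> affine_dependent S2"
    using mesh S1 S2 unfolding simplicial_mesh_def by auto
  have "x \<in> convex hull (S1 \<inter> S2)"
    using mesh S1 S2 x1 x2 unfolding simplicial_mesh_def by blast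
  then obtain u where u: "sum u (S1 \<inter> S2) = 1" "(\<Sum>y\<in>S1 \<inter> S2. u y *\<^sub>R y) = x"
    using convex_hull_finite[of "S1 \<inter> S2"] f1 by auto
  define u' where "u' = (\<lambda>y. if y \<in> S1 \<inter> S2 then u y else 0)"
  have u': "sum u' S = 1 \<and> (\<Sum>y\<in>S. u' y *\<^sub>R y) = x" if "S = S1 \<or> S = S2" for S
  proof -
    have sub: "S1 \<inter> S2 \<subseteq> S" "finite S" using that f1 f2 by auto
    have "sum u' S = sum u' (S1 \<inter> S2)"
      by (rule sum.mono_neutral_right) (use sub in \<open>auto simp: u'_def\<close>)
    moreover have "(\<Sum>y\<in>S. u' y *\<^sub>R y) = (\<Sum>y\<in>S1 \<inter> S2. u' y *\<^sub>R y)"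
      by (rule sum.mono_neutral_right) (use sub in \<open>auto simp: u'_def\<close>)
    ultimately show ?thesis using u by (simp add: u'_def)
  qed
  have "bary S1 z x = u' z" using bary_eqI[OF f1] u' z by blast
  moreover have "bary S2 z x = u' z" if "z \<in> S2" using bary_eqI[OF f2] u' that by blast
  ultimately show ?thesis by (simp add: u'_def)
qed

lemma hat_eq_bary:
  fixes Th :: "'a::euclidean_space set set"
  assumes mesh: "simplicial_mesh Th" and S0: "S0 \<in> Th" and x: "x \<in> convex hull S0"
  shows "hat Th z x = (if z \<in> S0 then bary S0 z x else 0)"
proof (cases "\<exists>S\<in>Th. z \<in> S \<and> x \<in> convex hull S")
  case True
  define S where "S = (SOME S. S \<in> Th \<and> z \<in> S \<and> x \<in> convex hull S)"
  have S: "S \<in> Th \<and> z \<in> S \<and> x \<in> convex hull S"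
    unfolding S_def by (rule someI_ex) (use True in blast)
  have "hat Th z x = bary S z x" using True by (simp add: hat_def S_def)
  also have "\<dots> = (if z \<in> S0 then bary S0 z x else 0)"
    using bary_conforming[OF mesh _ S0 _ x] S by blast
  finally show ?thesis .
next
  case False
  then show ?thesis using S0 x by (auto simp: hat_def)
qed

lemma hat_eq_convex_weights:
  fixes Th :: "'a::euclidean_space set set"
  assumes mesh: "simplicial_mesh Th" and x: "x \<in> (\<Union>S\<in>Th. convex hull S)"
  obtains S u where "S \<in> Th" "\<forall>y\<in>S. 0 \<le> u y" "sum u S = 1"
    "\<And>z. hat Th z x = (if z \<in> S then u z else 0)"
proof -
  obtain S where S: "S \<in> Th" "x \<in> convex hull S" using x by blast
  have fS: "finite S" "\<not> affine_dependent S"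
    using mesh S unfolding simplicial_mesh_def by auto
  obtain u where u: "\<forall>y\<in>S. 0 \<le> u y" "sum u S = 1" "(\<Sum>y\<in>S. u y *\<^sub>R y) = x"
    using convex_hull_finite[of S] fS S by auto
  have "hat Th z x = (if z \<in> S then u z else 0)" for z
    using hat_eq_bary[OF mesh S] bary_eqI[OF fS u(2,3)] by simp
  with S u that show thesis by blast
qed

lemma finite_nodes: "simplicial_mesh Th \<Longrightarrow> finite (nodes Th)"
  unfolding simplicial_mesh_def nodes_def by auto

lemma nodes_nonempty:
  fixes Th :: "'a::euclidean_space set set"
  assumes "simplicial_mesh Th"
  shows "nodes Th \<noteq> {}"
proof -
  obtain S where "S \<in> Th" "card S = DIM('a) + 1"
    using assms unfolding simplicial_mesh_def by blast
  then show ?thesis unfolding nodes_def by force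
qed

lemma hat_nonneg:
  assumes "simplicial_mesh Th" "x \<in> (\<Union>S\<in>Th. convex hull S)"
  shows "0 \<le> hat Th z x"
proof -
  obtain S u where "S \<in> Th" "\<forall>y\<in>S. 0 \<le> u y" "sum u S = 1"
    "\<And>z. hat Th z x = (if z \<in> S then u z else 0)"
    using hat_eq_convex_weights[OF assms] by blast
  then show ?thesis by simp
qed

lemma sum_hat_eq_1:
  assumes mesh: "simplicial_mesh Th" and x: "x \<in> (\<Union>S\<in>Th. convex hull S)"
  shows "(\<Sum>z\<in>nodes Th. hat Th z x) = 1"
proof -
  obtain S u where S: "S \<in> Th" "\<forall>y\<in>S. 0 \<le> u y" "sum u S = 1"
    and hat: "\<And>z. hat Th z x = (if z \<in> S then u z else 0)"
    using hat_eq_convex_weights[OF mesh x] by blast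
  have "S \<subseteq> nodes Th" using S unfolding nodes_def by auto
  then have "(\<Sum>z\<in>nodes Th. hat Th z x) = (\<Sum>z\<in>S. hat Th z x)"
    by (intro sum.mono_neutral_right finite_nodes[OF mesh]) (auto simp: hat)
  also have "\<dots> = 1" using S(3) by (simp add: hat)
  finally show ?thesis .
qed

lemma mesh_size_pos:
  fixes Th :: "'a::euclidean_space set set"
  assumes mesh: "simplicial_mesh Th"
  shows "0 < mesh_size Th"
proof -
  obtain S where S: "S \<in> Th" using mesh unfolding simplicial_mesh_def by auto
  have fS: "finite S" "card S = DIM('a) + 1" using mesh S unfolding simplicial_mesh_def by auto
  then have "2 \<le> card S" using DIM_positive[where 'a='a] by linarith
  then obtain a b where ab: "a \<in> S" "b \<in> S" "a \<noteq> b"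
    by (metis One_nat_def card_le_Suc0_iff_eq fS(1) not_less_eq_eq numeral_2_eq_2)
  have "0 < dist a b" using ab by simp
  also have "\<dots> \<le> diameter (convex hull S)"
    by (rule diameter_bounded_bound) (use fS ab finite_imp_bounded_convex_hull hull_inc in auto)
  also have "\<dots> \<le> mesh_size Th" unfolding mesh_size_def
    by (rule Max_ge) (use mesh S in \<open>auto simp: simplicial_mesh_def\<close>)
  finally show ?thesis .
qed

lemma interp_diff: "interp Th (\<lambda>z. w z - v z) x = interp Th w x - interp Th v x"
  unfolding interp_def by (simp only: left_diff_distrib sum_subtractf)

lemma interp_minus: "interp Th (\<lambda>z. - w z) x = - interp Th w x"
  unfolding interp_def by (simp only: mult_minus_left sum_negf)

lemma interp_le_if_support_le:
  assumes mesh: "simplicial_mesh Th" and x: "x \<in> (\<Union>S\<in>Th. convex hull S)"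
    and le: "\<And>y. y \<in> nodes Th \<Longrightarrow> 0 < hat Th y x \<Longrightarrow> w y \<le> c"
  shows "interp Th w x \<le> c"
proof -
  have "w y * hat Th y x \<le> c * hat Th y x" if "y \<in> nodes Th" for y
    using le[OF that] hat_nonneg[OF mesh x, of y] by (cases "0 < hat Th y x") auto
  then have "interp Th w x \<le> (\<Sum>y\<in>nodes Th. c * hat Th y x)"
    unfolding interp_def by (rule sum_mono)
  also have "\<dots> = c" by (simp add: sum_distrib_left[symmetric] sum_hat_eq_1[OF mesh x])
  finally show ?thesis .
qed

lemma interp_ge_if_support_ge:
  assumes "simplicial_mesh Th" "x \<in> (\<Union>S\<in>Th. convex hull S)"
    and "\<And>y. y \<in> nodes Th \<Longrightarrow> 0 < hat Th y x \<Longrightarrow> c \<le> w y"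
  shows "c \<le> interp Th w x"
  using interp_le_if_support_le[OF assms(1,2), of "\<lambda>y. - w y" "- c"] assms(3)
  by (simp add: interp_minus)

lemma interp_attains_support_bound:
  assumes mesh: "simplicial_mesh Th" and x: "x \<in> (\<Union>S\<in>Th. convex hull S)"
    and le: "\<And>y. y \<in> nodes Th \<Longrightarrow> 0 < hat Th y x \<Longrightarrow> w y \<le> c"
    and ge: "c \<le> interp Th w x"
    and y: "y \<in> nodes Th" "0 < hat Th y x"
  shows "w y = c"
proof -
  have nonneg: "0 \<le> (c - w z) * hat Th z x" if "z \<in> nodes Th" for z
    using le[OF that] hat_nonneg[OF mesh x, of z] by (cases "0 < hat Th z x") auto
  have "(\<Sum>y\<in>nodes Th. (c - w y) * hat Th y x)
      = c * (\<Sum>y\<in>nodes Th. hat Th y x) - interp Th w x"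
    unfolding interp_def by (simp only: left_diff_distrib sum_subtractf sum_distrib_left)
  also have "\<dots> = c - interp Th w x" by (simp add: sum_hat_eq_1[OF mesh x])
  finally have "(\<Sum>y\<in>nodes Th. (c - w y) * hat Th y x) = c - interp Th w x" .
  moreover have "0 \<le> (\<Sum>y\<in>nodes Th. (c - w y) * hat Th y x)"
    by (rule sum_nonneg) (rule nonneg)
  ultimately have "(\<Sum>y\<in>nodes Th. (c - w y) * hat Th y x) = 0"
    using ge by linarith
  then have "\<forall>z\<in>nodes Th. (c - w z) * hat Th z x = 0"
    using sum_nonneg_eq_0_iff[OF finite_nodes[OF mesh], of "\<lambda>z. (c - w z) * hat Th z x"] nonneg
    by blast
  then show ?thesis using y by force
qed

lemma inner_dom_dist_le:
  fixes \<Omega> :: "'a::euclidean_space set"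
  assumes z: "z \<in> inner_dom \<Omega> r" and dist: "dist z x \<le> s" and "s \<le> r"
  shows "x \<in> inner_dom \<Omega> (r - s)"
proof -
  have "z \<in> \<Omega>" and far: "r < infdist z (frontier \<Omega>)"
    using z by (auto simp: inner_dom_def)
  have "x \<in> \<Omega>"
  proof (rule ccontr)
    assume "x \<notin> \<Omega>"
    then obtain p where p: "p \<in> closed_segment z x" "p \<in> frontier \<Omega>"
      using connected_Int_frontier[of "closed_segment z x" \<Omega>] \<open>z \<in> \<Omega>\<close> by auto
    have "infdist z (frontier \<Omega>) \<le> dist z p" using p(2) by (rule infdist_le)
    also have "\<dots> \<le> dist z x" using p(1) by (simp add: dist_commute segment_bound(1) dist_norm)
    finally show False using far dist \<open>s \<le> r\<close> by linarith
  qed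
  moreover have "infdist z (frontier \<Omega>) \<le> infdist x (frontier \<Omega>) + dist z x"
    by (rule infdist_triangle)
  ultimately show ?thesis using far dist by (simp add: inner_dom_def)
qed

lemma stencil_subset_inner_dom:
  fixes \<Omega> :: "'a::euclidean_space set"
  assumes z: "z \<in> inner_dom \<Omega> (2 * \<epsilon>)" and "0 \<le> \<epsilon>" and S: "S \<subseteq> sphere 0 1"
  shows "stencil S \<epsilon> z \<subseteq> inner_dom \<Omega> \<epsilon>"
proof
  fix x assume "x \<in> stencil S \<epsilon> z"
  then have "dist z x \<le> \<epsilon>" using S \<open>0 \<le> \<epsilon>\<close> by (auto simp: stencil_def dist_norm)
  then show "x \<in> inner_dom \<Omega> \<epsilon>"
    using inner_dom_dist_le[OF z, of x \<epsilon>] \<open>0 \<le> \<epsilon>\<close> by simp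
qed

lemma finite_stencil: "finite S \<Longrightarrow> finite (stencil S \<epsilon> z)"
  by (simp add: stencil_def)

lemma center_in_stencil: "z \<in> stencil S \<epsilon> z"
  by (simp add: stencil_def)

lemma Max_image_le_Max_image_add:
  fixes F G :: "'b \<Rightarrow> real"
  assumes "finite P" "P \<noteq> {}" "\<And>x. x \<in> P \<Longrightarrow> F x \<le> G x + c"
  shows "Max (F ` P) \<le> Max (G ` P) + c"
proof -
  have "F x \<le> Max (G ` P) + c" if "x \<in> P" for x
    using assms(3)[OF that] Max_ge[OF finite_imageI[OF assms(1)], of "G x"] that by force
  then show ?thesis using assms(1,2) by (simp add: Max_le_iff)
qed

lemma Min_image_le_Min_image_add:
  fixes F G :: "'b \<Rightarrow> real"
  assumes "finite P" "P \<noteq> {}" "\<And>x. x \<in> P \<Longrightarrow> F x \<le> G x + c"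
  shows "Min (F ` P) \<le> Min (G ` P) + c"
proof -
  have "Min (G ` P) \<in> G ` P" using assms(1,2) by (intro Min_in) auto
  then obtain x where "x \<in> P" "G x = Min (G ` P)" by auto
  moreover have "Min (F ` P) \<le> F x" using assms(1) \<open>x \<in> P\<close> by simp
  ultimately show ?thesis using assms(3) by fastforce
qed

definition stencil_max ::
    "'a::euclidean_space set set \<Rightarrow> 'a set \<Rightarrow> real \<Rightarrow> ('a \<Rightarrow> real) \<Rightarrow> 'a \<Rightarrow> real"
  where "stencil_max Th S\<^sub>\<theta> \<epsilon> u z = Max (interp Th u ` stencil S\<^sub>\<theta> \<epsilon> z)"

definition stencil_min ::
    "'a::euclidean_space set set \<Rightarrow> 'a set \<Rightarrow> real \<Rightarrow> ('a \<Rightarrow> real) \<Rightarrow> 'a \<Rightarrow> real"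
  where "stencil_min Th S\<^sub>\<theta> \<epsilon> u z = Min (interp Th u ` stencil S\<^sub>\<theta> \<epsilon> z)"

lemma neg_inf_lap_eq:
  "neg_inf_lap Th S\<^sub>\<theta> \<epsilon> u z
     = (2 * u z - stencil_max Th S\<^sub>\<theta> \<epsilon> u z - stencil_min Th S\<^sub>\<theta> \<epsilon> u z) / \<epsilon>\<^sup>2"
  by (simp add: neg_inf_lap_def stencil_max_def stencil_min_def)

context
  fixes Th :: "'a::euclidean_space set set" and S\<^sub>\<theta> :: "'a set"
  assumes finite_directions: "finite S\<^sub>\<theta>"
begin

lemma interp_le_stencil_max: "x \<in> stencil S\<^sub>\<theta> \<epsilon> z \<Longrightarrow> interp Th u x \<le> stencil_max Th S\<^sub>\<theta> \<epsilon> u z"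
  by (simp add: stencil_max_def finite_stencil[OF finite_directions])

lemma stencil_min_le_interp: "x \<in> stencil S\<^sub>\<theta> \<epsilon> z \<Longrightarrow> stencil_min Th S\<^sub>\<theta> \<epsilon> u z \<le> interp Th u x"
  by (simp add: stencil_min_def finite_stencil[OF finite_directions])

lemma stencil_min_le_stencil_max: "stencil_min Th S\<^sub>\<theta> \<epsilon> u z \<le> stencil_max Th S\<^sub>\<theta> \<epsilon> u z"
  using stencil_min_le_interp interp_le_stencil_max center_in_stencil order_trans by blast

lemma stencil_max_attained:
  obtains x where "x \<in> stencil S\<^sub>\<theta> \<epsilon> z" "interp Th u x = stencil_max Th S\<^sub>\<theta> \<epsilon> u z"
proof -
  have "stencil_max Th S\<^sub>\<theta> \<epsilon> u z \<in> interp Th u ` stencil S\<^sub>\<theta> \<epsilon> z"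
    unfolding stencil_max_def
    by (rule Max_in) (use center_in_stencil[of z] in \<open>auto simp: finite_stencil[OF finite_directions]\<close>)
  then obtain x where "x \<in> stencil S\<^sub>\<theta> \<epsilon> z" "stencil_max Th S\<^sub>\<theta> \<epsilon> u z = interp Th u x"
    by (rule imageE)
  then show thesis using that[of x] by simp
qed

lemma stencil_min_attained:
  obtains x where "x \<in> stencil S\<^sub>\<theta> \<epsilon> z" "interp Th u x = stencil_min Th S\<^sub>\<theta> \<epsilon> u z"
proof -
  have "stencil_min Th S\<^sub>\<theta> \<epsilon> u z \<in> interp Th u ` stencil S\<^sub>\<theta> \<epsilon> z"
    unfolding stencil_min_def
    by (rule Min_in) (use center_in_stencil[of z] in \<open>auto simp: finite_stencil[OF finite_directions]\<close>)
  then obtain x where "x \<in> stencil S\<^sub>\<theta> \<epsilon> z" "stencil_min Th S\<^sub>\<theta> \<epsilon> u z = interp Th u x"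
    by (rule imageE)
  then show thesis using that[of x] by simp
qed

end

locale obstacle_sub_super =
  fixes Th :: "'a::euclidean_space set set" and S\<^sub>\<theta> :: "'a set" and \<epsilon> :: real
    and I :: "'a set" and f \<psi> w v :: "'a \<Rightarrow> real"
  assumes mesh: "simplicial_mesh Th"
    and finite_directions: "finite S\<^sub>\<theta>"
    and eps_pos: "0 < \<epsilon>"
    and stencil_in_mesh: "\<And>z. z \<in> I \<Longrightarrow> stencil S\<^sub>\<theta> \<epsilon> z \<subseteq> (\<Union>S\<in>Th. convex hull S)"
    and subsolution: "\<And>z. z \<in> I \<Longrightarrow> obstacle_op Th S\<^sub>\<theta> \<epsilon> w f \<psi> z \<le> 0"
    and supersolution: "\<And>z. z \<in> I \<Longrightarrow> 0 \<le> obstacle_op Th S\<^sub>\<theta> \<epsilon> v f \<psi> z"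
    and le_outside: "\<And>z. z \<in> nodes Th \<Longrightarrow> z \<notin> I \<Longrightarrow> w z \<le> v z"
begin

definition excess :: real
  where "excess = Max ((\<lambda>z. w z - v z) ` nodes Th)"

definition contact :: "'a set"
  where "contact = {z \<in> nodes Th. w z - v z = excess}"

lemma diff_le_excess: "z \<in> nodes Th \<Longrightarrow> w z - v z \<le> excess"
  by (simp add: excess_def finite_nodes[OF mesh])

lemma excess_pos: "\<not> (\<forall>z\<in>nodes Th. w z \<le> v z) \<Longrightarrow> 0 < excess"
  using diff_le_excess by force

lemma finite_contact: "finite contact"
  by (simp add: contact_def finite_nodes[OF mesh])

lemma contact_nonempty: "contact \<noteq> {}"
proof -
  have "excess \<in> (\<lambda>z. w z - v z) ` nodes Th"
    unfolding excess_def using finite_nodes[OF mesh] nodes_nonempty[OF mesh] by (intro Max_in) auto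
  then show ?thesis by (auto simp: contact_def)
qed

lemma contact_subset: "0 < excess \<Longrightarrow> contact \<subseteq> I"
  using le_outside by (force simp: contact_def)

lemma interp_le_add_excess:
  assumes "z \<in> I" "x \<in> stencil S\<^sub>\<theta> \<epsilon> z"
  shows "interp Th w x \<le> interp Th v x + excess"
proof -
  have "x \<in> (\<Union>S\<in>Th. convex hull S)" using stencil_in_mesh assms by blast
  then have "interp Th (\<lambda>y. w y - v y) x \<le> excess"
    by (rule interp_le_if_support_le[OF mesh]) (simp add: diff_le_excess)
  then show ?thesis by (simp add: interp_diff)
qed

lemma support_in_contact:
  assumes "z \<in> I" "x \<in> stencil S\<^sub>\<theta> \<epsilon> z" "interp Th v x + excess \<le> interp Th w x"
    and "y \<in> nodes Th" "0 < hat Th y x"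
  shows "y \<in> contact"
proof -
  have "x \<in> (\<Union>S\<in>Th. convex hull S)" using stencil_in_mesh assms by blast
  then have "w y - v y = excess"
    by (rule interp_attains_support_bound[OF mesh _ _ _ assms(4,5)])
      (use assms(3) diff_le_excess in \<open>auto simp: interp_diff\<close>)
  then show ?thesis using assms(4) by (simp add: contact_def)
qed

lemma neg_inf_lap_sandwich:
  assumes "0 < excess" "z \<in> contact"
  shows "neg_inf_lap Th S\<^sub>\<theta> \<epsilon> w z \<le> f z" "f z \<le> neg_inf_lap Th S\<^sub>\<theta> \<epsilon> v z"
proof -
  have "z \<in> I" using assms contact_subset by blast
  then have "v z \<ge> \<psi> z" "f z \<le> neg_inf_lap Th S\<^sub>\<theta> \<epsilon> v z"
    using supersolution by (auto simp: obstacle_op_def)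
  moreover have "w z = v z + excess" using assms(2) by (simp add: contact_def)
  ultimately show "neg_inf_lap Th S\<^sub>\<theta> \<epsilon> w z \<le> f z" "f z \<le> neg_inf_lap Th S\<^sub>\<theta> \<epsilon> v z"
    using subsolution[OF \<open>z \<in> I\<close>] assms(1) by (auto simp: obstacle_op_def)
qed

lemma stencil_extrema_at_contact:
  assumes "0 < excess" "z \<in> contact"
  shows "stencil_max Th S\<^sub>\<theta> \<epsilon> w z = stencil_max Th S\<^sub>\<theta> \<epsilon> v z + excess"
    and "stencil_min Th S\<^sub>\<theta> \<epsilon> w z = stencil_min Th S\<^sub>\<theta> \<epsilon> v z + excess"
proof -
  have z: "z \<in> I" using assms contact_subset by blast
  have P: "finite (stencil S\<^sub>\<theta> \<epsilon> z)" "stencil S\<^sub>\<theta> \<epsilon> z \<noteq> {}"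
    using finite_stencil[OF finite_directions] center_in_stencil[of z "S\<^sub>\<theta>" \<epsilon>] by auto
  have max_le: "stencil_max Th S\<^sub>\<theta> \<epsilon> w z \<le> stencil_max Th S\<^sub>\<theta> \<epsilon> v z + excess"
    unfolding stencil_max_def using P interp_le_add_excess[OF z] by (rule Max_image_le_Max_image_add)
  have min_le: "stencil_min Th S\<^sub>\<theta> \<epsilon> w z \<le> stencil_min Th S\<^sub>\<theta> \<epsilon> v z + excess"
    unfolding stencil_min_def using P interp_le_add_excess[OF z] by (rule Min_image_le_Min_image_add)
  have "neg_inf_lap Th S\<^sub>\<theta> \<epsilon> w z \<le> neg_inf_lap Th S\<^sub>\<theta> \<epsilon> v z"
    using neg_inf_lap_sandwich[OF assms] by linarith
  moreover have "0 < \<epsilon>\<^sup>2" using eps_pos by simp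
  ultimately have "2 * w z - stencil_max Th S\<^sub>\<theta> \<epsilon> w z - stencil_min Th S\<^sub>\<theta> \<epsilon> w z
      \<le> 2 * v z - stencil_max Th S\<^sub>\<theta> \<epsilon> v z - stencil_min Th S\<^sub>\<theta> \<epsilon> v z"
    by (simp add: neg_inf_lap_eq divide_le_cancel)
  moreover have "w z = v z + excess" using assms(2) by (simp add: contact_def)
  ultimately show "stencil_max Th S\<^sub>\<theta> \<epsilon> w z = stencil_max Th S\<^sub>\<theta> \<epsilon> v z + excess"
    and "stencil_min Th S\<^sub>\<theta> \<epsilon> w z = stencil_min Th S\<^sub>\<theta> \<epsilon> v z + excess"
    using max_le min_le by linarith+
qed

lemma neg_inf_lap_at_contact:
  assumes "0 < excess" "z \<in> contact"
  shows "neg_inf_lap Th S\<^sub>\<theta> \<epsilon> w z = f z"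
proof -
  have "w z = v z + excess" using assms(2) by (simp add: contact_def)
  then have "neg_inf_lap Th S\<^sub>\<theta> \<epsilon> w z = neg_inf_lap Th S\<^sub>\<theta> \<epsilon> v z"
    by (simp add: neg_inf_lap_eq stencil_extrema_at_contact[OF assms])
  then show ?thesis using neg_inf_lap_sandwich[OF assms] by linarith
qed

lemma stencil_max_le_Max_contact:
  assumes "0 < excess" "z \<in> contact"
  shows "stencil_max Th S\<^sub>\<theta> \<epsilon> w z \<le> Max (w ` contact)"
proof -
  obtain x where x: "x \<in> stencil S\<^sub>\<theta> \<epsilon> z" "interp Th w x = stencil_max Th S\<^sub>\<theta> \<epsilon> w z"
    by (rule stencil_max_attained[OF finite_directions])
  have z: "z \<in> I" using assms contact_subset by blast
  have "interp Th v x + excess \<le> interp Th w x"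
    using interp_le_stencil_max[OF finite_directions x(1), of Th v] x(2)
      stencil_extrema_at_contact(1)[OF assms] by linarith
  then have "\<And>y. y \<in> nodes Th \<Longrightarrow> 0 < hat Th y x \<Longrightarrow> y \<in> contact"
    using support_in_contact[OF z x(1)] by blast
  then have "interp Th w x \<le> Max (w ` contact)"
    using stencil_in_mesh[OF z] x(1) finite_contact
    by (intro interp_le_if_support_le[OF mesh]) auto
  then show ?thesis using x(2) by simp
qed

lemma Min_contact_le_stencil_min:
  assumes "0 < excess" "z \<in> contact"
  shows "Min (v ` contact) \<le> stencil_min Th S\<^sub>\<theta> \<epsilon> v z"
proof -
  obtain x where x: "x \<in> stencil S\<^sub>\<theta> \<epsilon> z" "interp Th v x = stencil_min Th S\<^sub>\<theta> \<epsilon> v z"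
    by (rule stencil_min_attained[OF finite_directions])
  have z: "z \<in> I" using assms contact_subset by blast
  have "interp Th v x + excess \<le> interp Th w x"
    using stencil_min_le_interp[OF finite_directions x(1), of Th w] x(2)
      stencil_extrema_at_contact(2)[OF assms] by linarith
  then have "\<And>y. y \<in> nodes Th \<Longrightarrow> 0 < hat Th y x \<Longrightarrow> y \<in> contact"
    using support_in_contact[OF z x(1)] by blast
  then have "Min (v ` contact) \<le> interp Th v x"
    using stencil_in_mesh[OF z] x(1) finite_contact
    by (intro interp_ge_if_support_ge[OF mesh]) auto
  then show ?thesis using x(2) by simp
qed

lemma Max_contact_attained:
  obtains z where "z \<in> contact" "w z = Max (w ` contact)"
proof -
  have "Max (w ` contact) \<in> w ` contact"
    using finite_contact contact_nonempty by (intro Max_in) auto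
  with that show thesis by force
qed

lemma Min_contact_attained:
  obtains z where "z \<in> contact" "v z = Min (v ` contact)"
proof -
  have "Min (v ` contact) \<in> v ` contact"
    using finite_contact contact_nonempty by (intro Min_in) auto
  with that show thesis by force
qed

lemma support_at_peak:
  assumes pos: "0 < excess" and z: "z \<in> contact" "w z = Max (w ` contact)"
    and f: "f z = 0" and x: "x \<in> stencil S\<^sub>\<theta> \<epsilon> z"
    and y: "y \<in> nodes Th" "0 < hat Th y x"
  shows "y \<in> contact \<and> w y = w z"
proof -
  have zI: "z \<in> I" using pos z contact_subset by blast
  have mx: "x \<in> (\<Union>S\<in>Th. convex hull S)" using stencil_in_mesh[OF zI] x by blast
  have "stencil_max Th S\<^sub>\<theta> \<epsilon> w z \<le> w z" using stencil_max_le_Max_contact[OF pos z(1)] z(2) by simp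
  moreover have "2 * w z = stencil_max Th S\<^sub>\<theta> \<epsilon> w z + stencil_min Th S\<^sub>\<theta> \<epsilon> w z"
    using neg_inf_lap_at_contact[OF pos z(1)] f eps_pos by (simp add: neg_inf_lap_eq)
  moreover have "stencil_min Th S\<^sub>\<theta> \<epsilon> w z \<le> stencil_max Th S\<^sub>\<theta> \<epsilon> w z"
    by (rule stencil_min_le_stencil_max[OF finite_directions])
  ultimately have "stencil_max Th S\<^sub>\<theta> \<epsilon> w z = w z" "stencil_min Th S\<^sub>\<theta> \<epsilon> w z = w z"
    by linarith+
  then have wx: "interp Th w x = w z"
    using interp_le_stencil_max[OF finite_directions x, of Th w]
      stencil_min_le_interp[OF finite_directions x, of Th w] by linarith
  have "interp Th v x + excess \<le> interp Th w x"
    using interp_le_stencil_max[OF finite_directions x, of Th v] wx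
      stencil_extrema_at_contact(1)[OF pos z(1)] \<open>stencil_max Th S\<^sub>\<theta> \<epsilon> w z = w z\<close>
    by linarith
  then have support: "\<And>y. y \<in> nodes Th \<Longrightarrow> 0 < hat Th y x \<Longrightarrow> y \<in> contact"
    using support_in_contact[OF zI x] by blast
  have "w y = w z"
    by (rule interp_attains_support_bound[OF mesh mx _ _ y])
      (use support finite_contact z(2) wx in auto)
  with support[OF y] show ?thesis by blast
qed

theorem comparison_if_rhs_neg:
  assumes "\<And>z. z \<in> I \<Longrightarrow> f z < 0"
  shows "\<forall>z\<in>nodes Th. w z \<le> v z"
proof (rule ccontr)
  assume "\<not> ?thesis"
  then have pos: "0 < excess" by (rule excess_pos)
  obtain z where z: "z \<in> contact" "w z = Max (w ` contact)" by (rule Max_contact_attained)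
  have "stencil_min Th S\<^sub>\<theta> \<epsilon> w z \<le> stencil_max Th S\<^sub>\<theta> \<epsilon> w z"
    by (rule stencil_min_le_stencil_max[OF finite_directions])
  then have "0 \<le> 2 * w z - stencil_max Th S\<^sub>\<theta> \<epsilon> w z - stencil_min Th S\<^sub>\<theta> \<epsilon> w z"
    using stencil_max_le_Max_contact[OF pos z(1)] z(2) by linarith
  then have "0 \<le> neg_inf_lap Th S\<^sub>\<theta> \<epsilon> w z"
    unfolding neg_inf_lap_eq by simp
  moreover have "f z < 0" using assms contact_subset[OF pos] z(1) by blast
  ultimately show False using neg_inf_lap_sandwich(1)[OF pos z(1)] by linarith
qed

theorem comparison_if_rhs_pos:
  assumes "\<And>z. z \<in> I \<Longrightarrow> 0 < f z"
  shows "\<forall>z\<in>nodes Th. w z \<le> v z"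
proof (rule ccontr)
  assume "\<not> ?thesis"
  then have pos: "0 < excess" by (rule excess_pos)
  obtain z where z: "z \<in> contact" "v z = Min (v ` contact)" by (rule Min_contact_attained)
  have "stencil_min Th S\<^sub>\<theta> \<epsilon> v z \<le> stencil_max Th S\<^sub>\<theta> \<epsilon> v z"
    by (rule stencil_min_le_stencil_max[OF finite_directions])
  then have "2 * v z - stencil_max Th S\<^sub>\<theta> \<epsilon> v z - stencil_min Th S\<^sub>\<theta> \<epsilon> v z \<le> 0"
    using Min_contact_le_stencil_min[OF pos z(1)] z(2) by linarith
  then have "neg_inf_lap Th S\<^sub>\<theta> \<epsilon> v z \<le> 0"
    unfolding neg_inf_lap_eq by (rule divide_nonpos_nonneg) simp
  moreover have "0 < f z" using assms contact_subset[OF pos] z(1) by blast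
  ultimately show False using neg_inf_lap_sandwich(2)[OF pos z(1)] by linarith
qed

theorem comparison_if_rhs_zero:
  assumes f: "\<And>z. z \<in> I \<Longrightarrow> f z = 0"
    and M1: "\<And>S. S \<subseteq> I \<Longrightarrow> S \<noteq> {} \<Longrightarrow> \<exists>z\<in>S. \<exists>z'\<in>nodes Th - S. z' \<in> ext_stencil Th S\<^sub>\<theta> \<epsilon> z"
  shows "\<forall>z\<in>nodes Th. w z \<le> v z"
proof (rule ccontr)
  assume "\<not> ?thesis"
  then have pos: "0 < excess" by (rule excess_pos)
  define peak where "peak = {z \<in> contact. w z = Max (w ` contact)}"
  have "peak \<subseteq> I" using contact_subset[OF pos] by (auto simp: peak_def)
  moreover obtain z0 where "z0 \<in> contact" "w z0 = Max (w ` contact)"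
    by (rule Max_contact_attained)
  then have "peak \<noteq> {}" by (auto simp: peak_def)
  ultimately obtain z z' where z: "z \<in> peak"
    and z': "z' \<in> nodes Th - peak" "z' \<in> ext_stencil Th S\<^sub>\<theta> \<epsilon> z"
    using M1 by blast
  have "z' \<noteq> z" using z z'(1) by blast
  then obtain u where u: "u \<in> S\<^sub>\<theta>" "0 < hat Th z' (z + \<epsilon> *\<^sub>R u)"
    using z'(2) by (auto simp: ext_stencil_def)
  have "z + \<epsilon> *\<^sub>R u \<in> stencil S\<^sub>\<theta> \<epsilon> z" unfolding stencil_def using u(1) by blast
  moreover have "z \<in> contact" "w z = Max (w ` contact)" "f z = 0"
    using z f \<open>peak \<subseteq> I\<close> by (auto simp: peak_def)
  ultimately have "z' \<in> contact \<and> w z' = w z"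
    using support_at_peak[OF pos] z'(1) u(2) by blast
  then show False using z z'(1) by (auto simp: peak_def)
qed

end

theorem theorem5p5:
  fixes \<Omega> :: "'a::euclidean_space set"
    and Th :: "'a set set"
    and \<epsilon> \<theta> :: real
    and S\<^sub>\<theta> :: "'a set"
    and f \<psi> g w v :: "'a \<Rightarrow> real"
  assumes dom: "continuous_boundary_domain \<Omega>"
    and mesh: "simplicial_mesh Th"
    and mesh_between: "inner_dom \<Omega> (mesh_size Th) \<subseteq> mesh_domain Th" "mesh_domain Th \<subseteq> \<Omega>"
    and eps: "mesh_size Th \<le> \<epsilon>" "\<epsilon> \<le> diameter \<Omega>"
    and theta: "0 < \<theta>" "\<theta> \<le> 1"
    and dirs: "direction_set \<theta> S\<^sub>\<theta>"
    and OBS1: "continuous_on (closure \<Omega>) \<psi>" "continuous_on (frontier \<Omega>) g"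
              "\<forall>x\<in>frontier \<Omega>. \<psi> x < g x"
    and RHS2: "(\<exists>c<0. \<forall>x\<in>\<Omega>. f x \<le> c) \<or> (\<exists>c>0. \<forall>x\<in>\<Omega>. f x \<ge> c) \<or>
               ((\<forall>x\<in>\<Omega>. f x = 0) \<and> cond_M1 \<Omega> Th S\<^sub>\<theta> \<epsilon>)"
    and wV: "w \<in> Vh Th" and vV: "v \<in> Vh Th"
    and sub: "\<forall>z\<in>interior_nodes \<Omega> Th \<epsilon>. obstacle_op Th S\<^sub>\<theta> \<epsilon> w f \<psi> z \<le> 0"
    and super: "\<forall>z\<in>interior_nodes \<Omega> Th \<epsilon>. 0 \<le> obstacle_op Th S\<^sub>\<theta> \<epsilon> v f \<psi> z"
    and bdry: "\<forall>z\<in>boundary_nodes \<Omega> Th \<epsilon>. w z \<le> v z"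
  shows "\<forall>z\<in>nodes Th. w z \<le> v z"
proof -
  let ?I = "interior_nodes \<Omega> Th \<epsilon>"
  have eps_pos: "0 < \<epsilon>" using mesh_size_pos[OF mesh] eps(1) by linarith
  have S: "finite S\<^sub>\<theta>" "S\<^sub>\<theta> \<subseteq> sphere 0 1" using dirs by (auto simp: direction_set_def)
  have "stencil S\<^sub>\<theta> \<epsilon> z \<subseteq> (\<Union>S\<in>Th. convex hull S)" if "z \<in> ?I" for z
  proof -
    have "stencil S\<^sub>\<theta> \<epsilon> z \<subseteq> inner_dom \<Omega> \<epsilon>"
      using stencil_subset_inner_dom[OF _ _ S(2)] that eps_pos by (auto simp: interior_nodes_def)
    also have "\<dots> \<subseteq> inner_dom \<Omega> (mesh_size Th)" using eps(1) by (auto simp: inner_dom_def)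
    also have "\<dots> \<subseteq> (\<Union>S\<in>Th. convex hull S)"
      using mesh_between(1) interior_subset by (fastforce simp: mesh_domain_def)
    finally show ?thesis .
  qed
  then interpret obstacle_sub_super Th S\<^sub>\<theta> \<epsilon> ?I f \<psi> w v
    by unfold_locales (use mesh S(1) eps_pos sub super bdry in \<open>auto simp: boundary_nodes_def\<close>)
  have I: "z \<in> \<Omega>" if "z \<in> ?I" for z using that by (simp add: interior_nodes_def inner_dom_def)
  from RHS2 show ?thesis
  proof (elim disjE conjE exE)
    fix c :: real assume "c < 0" "\<forall>x\<in>\<Omega>. f x \<le> c"
    then show ?thesis using I by (intro comparison_if_rhs_neg) force
  next
    fix c :: real assume "0 < c" "\<forall>x\<in>\<Omega>. c \<le> f x"
    then show ?thesis using I by (intro comparison_if_rhs_pos) force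
  next
    assume "\<forall>x\<in>\<Omega>. f x = 0" "cond_M1 \<Omega> Th S\<^sub>\<theta> \<epsilon>"
    then show ?thesis using I by (intro comparison_if_rhs_zero) (auto simp: cond_M1_def)
  qed
qed

end
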